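(* Let $E$ be a non-empty set and let $S:(E\times[0,1]\times\{0,1\})^*\to(-\infty,\infty]$ be a forecast-continuous supermartingale. Then for any $T\ge1$ and any $e_1,\dots,e_T\in E$, $\pi_1,\dots,\pi_{T-1}\in[0,1]$, $\omega_1,\dots,\omega_{T-1}\in\{0,1\}$, there exists $\pi\in[0,1]$ such that for both $\omega=0$ and $\omega=1$, $$S(e_1,\pi_1,\omega_1,\dots,e_{T-1},\pi_{T-1},\omega_{T-1},e_T,\pi,\omega)\le S(e_1,\pi_1,\omega_1,\dots,e_{T-1},\pi_{T-1},\omega_{T-1}).$$
   Context: $(E\times[0,1]\times\{0,1\})^*$ denotes the set of finite sequences of triples. A function $S:(E\times[0,1]\times\{0,1\})^*\to(-\infty,\infty]$ is a (game-theoretic) supermartingale if for any $T$, any $e_1,\dots,e_T\in E$, any $\pi_1,\dots,\pi_T\in[0,1]$ and any $\omega_1,\dots,\omega_{T-1}\in\{0,1\}$, $\pi_T S(e_1,\pi_1,\omega_1,\dots,e_T,\pi_T,1)+(1-\pi_T)S(e_1,\pi_1,\omega_1,\dots,e_T,\pi_T,0)\le S(e_1,\pi_1,\omega_1,\dots,e_{T-1},\pi_{T-1},\omega_{T-1})$. It is forecast-continuous if for all $T\ge1$, all $e_1,\dots,e_T\in E$, all $\pi_1,\dots,\pi_{T-1}\in[0,1]$ and all $\omega_1,\dots,\omega_T\in\{0,1\}$, the map $\pi\mapsto S(e_1,\pi_1,\omega_1,\dots,e_{T-1},\pi_{T-1},\omega_{T-1},e_T,\pi,\omega_T)$ is continuous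 on $[0,1]$. *)

theory Defs
  imports "HOL-Analysis.Analysis"
begin

text \<open>A finite sequence of triples (e, pi, omega) is a list; omega in {0,1} is encoded as bool
  (True = 1, False = 0). A list is admissible if all e lie in E and all pi lie in [0,1].\<close>

definition admissible :: "'e set \<Rightarrow> ('e \<times> real \<times> bool) list \<Rightarrow> bool" where
  "admissible E xs \<longleftrightarrow> (\<forall>(e, p, w) \<in> set xs. e \<in> E \<and> p \<in> {0..1})"

text \<open>Values live in ereal; the codomain (-inf, inf] is imposed separately.
  Note ereal 0 * \<infinity> = 0 (the usual convention).\<close>

definition supermartingale :: "'e set \<Rightarrow> (('e \<times> real \<times> bool) list \<Rightarrow> ereal) \<Rightarrow> bool" where
  "supermartingale E S \<longleftrightarrow>
     (\<forall>xs e p. admissible E xs \<and> e \<in> E \<and> p \<in> {0..1} \<longrightarrow>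
        ereal p * S (xs @ [(e, p, True)]) + ereal (1 - p) * S (xs @ [(e, p, False)]) \<le> S xs)"

definition forecast_continuous :: "'e set \<Rightarrow> (('e \<times> real \<times> bool) list \<Rightarrow> ereal) \<Rightarrow> bool" where
  "forecast_continuous E S \<longleftrightarrow>
     (\<forall>xs e w. admissible E xs \<and> e \<in> E \<longrightarrow>
        continuous_on {0..1} (\<lambda>p. S (xs @ [(e, p, w)])))"

end

theory Submission
  imports Defs
begin

text \<open>If both outcome values exceeded the current capital at some forecast p, so would their
  p-mixture, contradicting the supermartingale property. Hence the closed sets of forecasts
  at which the outcome 1, resp. 0, does not increase the capital cover [0,1]; they contain 1, resp. 0,
  so by connectedness of [0,1] they intersect.\<close>

lemma ereal_less_convex_combination:
  fixes a b c :: ereal and p :: real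
  assumes "0 \<le> p" "p \<le> 1" "c < a" "c < b"
  shows "c < ereal p * a + ereal (1 - p) * b"
proof (cases c)
  case (real r)
  show ?thesis
  proof (cases a)
    case (real x)
    show ?thesis
    proof (cases b)
      case (real y)
      have "p * r \<le> p * x" "(1 - p) * r \<le> (1 - p) * y"
        using assms \<open>c = ereal r\<close> \<open>a = ereal x\<close> \<open>b = ereal y\<close> by (auto intro: mult_left_mono)
      moreover have "p * r < p * x \<or> (1 - p) * r < (1 - p) * y"
        using assms \<open>c = ereal r\<close> \<open>a = ereal x\<close> \<open>b = ereal y\<close>
        by (cases "p = 0") (auto intro: mult_strict_left_mono)
      ultimately have "r < p * x + (1 - p) * y" by (auto simp: algebra_simps)
      then show ?thesis using \<open>c = ereal r\<close> \<open>a = ereal x\<close> \<open>b = ereal y\<close> by simp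
    qed (use assms \<open>c = ereal r\<close> \<open>a = ereal x\<close> in \<open>cases "p = 1"; auto\<close>)+
  next
    case PInf
    then show ?thesis
      using assms by (cases "p = 0"; cases b) (auto simp: zero_ereal_def[symmetric])
  qed (use assms in auto)
next
  case MInf
  then show ?thesis
    using assms by (cases a; cases b) (auto simp: zero_ereal_def[symmetric])
qed (use assms in auto)

lemma continuous_mixture_common_point:
  fixes f g :: "real \<Rightarrow> ereal" and c :: ereal
  assumes "continuous_on {0..1} f" "continuous_on {0..1} g"
    and mix: "\<And>p. p \<in> {0..1} \<Longrightarrow> ereal p * f p + ereal (1 - p) * g p \<le> c"
  shows "\<exists>p \<in> {0..1}. f p \<le> c \<and> g p \<le> c"
proof -
  define A where "A h = {0..1} \<inter> h -` {..c}" for h :: "real \<Rightarrow> ereal"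
  have closed: "closed (A f)" "closed (A g)"
    unfolding A_def using assms(1,2) by (auto intro: continuous_closed_preimage)
  have cover: "{0..1} \<subseteq> A f \<union> A g"
  proof
    fix p :: real
    assume p: "p \<in> {0..1}"
    show "p \<in> A f \<union> A g"
    proof (rule ccontr)
      assume "p \<notin> A f \<union> A g"
      then have "c < ereal p * f p + ereal (1 - p) * g p"
        using p unfolding A_def by (intro ereal_less_convex_combination) auto
      with mix[OF p] show False by simp
    qed
  qed
  have "1 \<in> A f" "0 \<in> A g" "A f \<subseteq> {0..1}" "A g \<subseteq> {0..1}"
    using mix[of 0] mix[of 1] unfolding A_def by (auto simp: zero_ereal_def[symmetric])
  then have "A f \<inter> A g \<noteq> {}"
    using connected_closedD[OF connected_Icc[of "0::real" 1] _ cover closed] by blast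
  then show ?thesis unfolding A_def by auto
qed

theorem lemma1:
  fixes E :: "'e set" and S :: "('e \<times> real \<times> bool) list \<Rightarrow> ereal"
  assumes "E \<noteq> {}"
    and "\<forall>xs. admissible E xs \<longrightarrow> S xs \<noteq> -\<infinity>"
    and "supermartingale E S"
    and "forecast_continuous E S"
    and "admissible E xs" and "e \<in> E"
  shows "\<exists>p \<in> {0..1}. \<forall>w. S (xs @ [(e, p, w)]) \<le> S xs"
proof -
  have "\<exists>p \<in> {0..1}. S (xs @ [(e, p, True)]) \<le> S xs \<and> S (xs @ [(e, p, False)]) \<le> S xs"
    using assms(3-6) unfolding supermartingale_def forecast_continuous_def
    by (intro continuous_mixture_common_point) auto
  then show ?thesis by (metis (full_types))
qed

end
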